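(* Let $E_1,E_2$ be nonempty bounded subsets of $M_a$ and $f:E_1\to E_2$ a surjective $d_a$-isometry; let $p\in E_1$ and $q=f(p)$. Let $F:\mathrm{GS}(E_1,p)\to M_a$ be defined by $F\big(p+\sum_i\alpha_i(x_i-p)\big)=q+\sum_i\alpha_i(f(x_i)-q)$ for all $x_i\in E_1$, $\alpha_i\in\mathbb R$ with $\sum_i\alpha_i(x_i-p)\in M_a$. Then $F$ is a $d_a$-isometry, and $F(x)=f(x)$ for all $x\in E_1$.
   Context: Let $a=\{a_i\}$ be a sequence of positive reals with $\sum_i a_i^2<\infty$, $M_a=\{x\in\mathbb{R}^{\mathbb N}:\sum_i a_i^2x_i^2<\infty\}$ with inner product $\langle x,y\rangle_a=\sum_i a_i^2x_iy_i$, norm $\|\cdot\|_a$ and metric $d_a(x,y)=\|x-y\|_a$; a $d_a$-isometry is a map preserving $d_a$. Sums are indexed by finite or countable subsets of $\mathbb N$; infinite sums are $\|\cdot\|_a$-limits of partial sums. For $p\in E\subset M_a$, $\mathrm{GS}(E,p)=\{p+\sum_i\alpha_i(x_i-p)\in M_a: x_i\in E,\ \alpha_i\in\mathbb R\}$. (The map $F$ is well defined: the right-hand side converges and is independent of the representation.) *)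

theory Defs
  imports "HOL-Analysis.Analysis" "HOL-Library.Function_Algebras"
begin

definition M_a :: "(nat \<Rightarrow> real) \<Rightarrow> (nat \<Rightarrow> real) set" where
  "M_a a = {x. summable (\<lambda>i. (a i)\<^sup>2 * (x i)\<^sup>2)}"

definition inner_a :: "(nat \<Rightarrow> real) \<Rightarrow> (nat \<Rightarrow> real) \<Rightarrow> (nat \<Rightarrow> real) \<Rightarrow> real" where
  "inner_a a x y = (\<Sum>i. (a i)\<^sup>2 * x i * y i)"

definition norm_a :: "(nat \<Rightarrow> real) \<Rightarrow> (nat \<Rightarrow> real) \<Rightarrow> real" where
  "norm_a a x = sqrt (inner_a a x x)"

definition d_a :: "(nat \<Rightarrow> real) \<Rightarrow> (nat \<Rightarrow> real) \<Rightarrow> (nat \<Rightarrow> real) \<Rightarrow> real" where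
  "d_a a x y = norm_a a (x - y)"

definition isometry_a :: "(nat \<Rightarrow> real) \<Rightarrow> (nat \<Rightarrow> real) set \<Rightarrow> ((nat \<Rightarrow> real) \<Rightarrow> (nat \<Rightarrow> real)) \<Rightarrow> bool" where
  "isometry_a a A g \<longleftrightarrow> (\<forall>x\<in>A. \<forall>y\<in>A. d_a a (g x) (g y) = d_a a x y)"

definition bounded_a :: "(nat \<Rightarrow> real) \<Rightarrow> (nat \<Rightarrow> real) set \<Rightarrow> bool" where
  "bounded_a a E \<longleftrightarrow> (\<exists>R. \<forall>x\<in>E. norm_a a x \<le> R)"

text \<open>The series \<open>\<Sum>_{i\<in>I} \<alpha>_i (x_i - p)\<close> (indexed by a subset I of \<nat>, summed in the
  natural order of I) converges in d_a to s: partial sums over I \<inter> {..<n}.\<close>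

definition series_to :: "(nat \<Rightarrow> real) \<Rightarrow> nat set \<Rightarrow> (nat \<Rightarrow> (nat \<Rightarrow> real)) \<Rightarrow> (nat \<Rightarrow> real)
    \<Rightarrow> (nat \<Rightarrow> real) \<Rightarrow> (nat \<Rightarrow> real) \<Rightarrow> bool" where
  "series_to a I x \<alpha> p s \<longleftrightarrow>
     ((\<lambda>n. d_a a (\<Sum>i\<in>I \<inter> {..<n}. (\<lambda>k. \<alpha> i * (x i k - p k))) s) \<longlonglongrightarrow> 0)"

definition GS :: "(nat \<Rightarrow> real) \<Rightarrow> (nat \<Rightarrow> real) set \<Rightarrow> (nat \<Rightarrow> real) \<Rightarrow> (nat \<Rightarrow> real) set" where
  "GS a E p = {y. y \<in> M_a a \<and> (\<exists>I x \<alpha> s. (\<forall>i\<in>I. x i \<in> E) \<and> s \<in> M_a a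
                    \<and> series_to a I x \<alpha> p s \<and> y = p + s)}"

end

theory Submission
  imports Defs
begin

(* By polarization, an isometry f of E satisfies <f x - f p, f y - f p> = <x - p, y - p> for all
   x, y in E.  The squared norm of a finite linear combination of the vectors x - p is a quadratic
   form in these inner products, so f also preserves distances between finite combinations.
   Passing to the limit along the partial sums that define points of GS(E, p) and their images
   under F shows that F is an isometry.  For x in E, the one-term representation
   x = p + 1 (x - p) gives F x - f p = f x - f p, since d_a-limits are unique when all a_i > 0. *)

lemma M_a_zero [simp]: "0 \<in> M_a a"
  by (simp add: M_a_def)

lemma inner_a_summable:
  assumes "x \<in> M_a a" "y \<in> M_a a"
  shows "summable (\<lambda>i. (a i)\<^sup>2 * x i * y i)"
proof (rule summable_comparison_test)
  show "summable (\<lambda>i. (a i)\<^sup>2 * (x i)\<^sup>2 + (a i)\<^sup>2 * (y i)\<^sup>2)"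
    using assms by (intro summable_add) (auto simp: M_a_def)
  have "\<bar>x i * y i\<bar> \<le> (x i)\<^sup>2 + (y i)\<^sup>2" for i
  proof -
    have "2 * \<bar>x i * y i\<bar> \<le> (x i)\<^sup>2 + (y i)\<^sup>2"
      using sum_squares_bound[of "\<bar>x i\<bar>" "\<bar>y i\<bar>"] by (simp add: abs_mult mult.assoc)
    then show ?thesis
      using abs_ge_zero[of "x i * y i"] by linarith
  qed
  then have "(a i)\<^sup>2 * \<bar>x i * y i\<bar> \<le> (a i)\<^sup>2 * ((x i)\<^sup>2 + (y i)\<^sup>2)" for i
    by (simp add: mult_left_mono)
  then show "\<exists>N. \<forall>n\<ge>N. norm ((a n)\<^sup>2 * x n * y n) \<le> (a n)\<^sup>2 * (x n)\<^sup>2 + (a n)\<^sup>2 * (y n)\<^sup>2"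
    by (simp add: abs_mult distrib_left mult.assoc)
qed

lemma M_a_add:
  assumes "x \<in> M_a a" "y \<in> M_a a"
  shows "x + y \<in> M_a a"
proof -
  have "summable (\<lambda>i. (a i)\<^sup>2 * (x i)\<^sup>2 + 2 * ((a i)\<^sup>2 * x i * y i) + (a i)\<^sup>2 * (y i)\<^sup>2)"
    using assms inner_a_summable[OF assms]
    by (intro summable_add summable_mult) (auto simp: M_a_def)
  then show ?thesis
    unfolding M_a_def by (simp add: power2_eq_square algebra_simps)
qed

lemma M_a_scale:
  assumes "x \<in> M_a a"
  shows "(\<lambda>k. c * x k) \<in> M_a a"
proof -
  have "summable (\<lambda>i. c\<^sup>2 * ((a i)\<^sup>2 * (x i)\<^sup>2))"
    using assms unfolding M_a_def by (intro summable_mult) simp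
  then show ?thesis
    unfolding M_a_def by (simp add: power_mult_distrib algebra_simps)
qed

lemma M_a_diff:
  assumes "x \<in> M_a a" "y \<in> M_a a"
  shows "x - y \<in> M_a a"
proof -
  have "x - y = x + (\<lambda>k. (-1) * y k)"
    by (simp add: fun_eq_iff)
  then show ?thesis
    using assms by (simp only: M_a_add M_a_scale)
qed

lemma M_a_sum: "(\<And>i. i \<in> A \<Longrightarrow> u i \<in> M_a a) \<Longrightarrow> (\<Sum>i\<in>A. u i) \<in> M_a a"
  by (induction A rule: infinite_finite_induct) (auto simp: M_a_add)

lemma M_a_combination:
  assumes "\<And>i. i \<in> A \<Longrightarrow> x i \<in> M_a a" "p \<in> M_a a"
  shows "(\<Sum>i\<in>A. (\<lambda>k. c i * (x i k - p k))) \<in> M_a a"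
proof -
  have "(\<lambda>k. c i * (x i - p) k) \<in> M_a a" if "i \<in> A" for i
    using assms that by (intro M_a_scale M_a_diff) auto
  then show ?thesis
    by (intro M_a_sum) simp
qed

lemma inner_a_commute: "inner_a a x y = inner_a a y x"
  unfolding inner_a_def by (simp add: algebra_simps)

lemma inner_a_self: "inner_a a x x = (\<Sum>i. (a i)\<^sup>2 * (x i)\<^sup>2)"
  by (simp add: inner_a_def power2_eq_square mult.assoc)

lemma inner_a_self_nonneg: "x \<in> M_a a \<Longrightarrow> 0 \<le> inner_a a x x"
  unfolding inner_a_self M_a_def by (intro suminf_nonneg) auto

lemma norm_a_power2: "x \<in> M_a a \<Longrightarrow> (norm_a a x)\<^sup>2 = inner_a a x x"
  unfolding norm_a_def using inner_a_self_nonneg by simp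

lemma inner_a_add_left:
  assumes "x \<in> M_a a" "y \<in> M_a a" "z \<in> M_a a"
  shows "inner_a a (x + y) z = inner_a a x z + inner_a a y z"
  unfolding inner_a_def
  using suminf_add[OF inner_a_summable[OF assms(1,3)] inner_a_summable[OF assms(2,3)]]
  by (simp add: algebra_simps)

lemma inner_a_scale_left:
  assumes "x \<in> M_a a" "z \<in> M_a a"
  shows "inner_a a (\<lambda>k. c * x k) z = c * inner_a a x z"
  unfolding inner_a_def
  using suminf_mult[OF inner_a_summable[OF assms], of c]
  by (simp add: algebra_simps)

lemma inner_a_sum_left:
  assumes "\<And>i. i \<in> A \<Longrightarrow> u i \<in> M_a a" "z \<in> M_a a"
  shows "inner_a a (\<Sum>i\<in>A. u i) z = (\<Sum>i\<in>A. inner_a a (u i) z)"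
  using assms
proof (induction A rule: infinite_finite_induct)
  case (insert i A)
  have "inner_a a (sum u (insert i A)) z = inner_a a (u i + sum u A) z"
    by (simp only: sum.insert[OF insert(1,2)])
  also have "\<dots> = inner_a a (u i) z + inner_a a (sum u A) z"
    using insert.prems by (intro inner_a_add_left M_a_sum) auto
  also have "\<dots> = (\<Sum>i\<in>insert i A. inner_a a (u i) z)"
    using insert by simp
  finally show ?case .
qed (simp_all add: inner_a_def)

lemma inner_a_combination:
  assumes "\<And>k. k \<in> K \<Longrightarrow> u k \<in> M_a a" "\<And>l. l \<in> L \<Longrightarrow> v l \<in> M_a a"
  shows "inner_a a (\<Sum>k\<in>K. (\<lambda>i. c k * u k i)) (\<Sum>l\<in>L. (\<lambda>i. d l * v l i))
       = (\<Sum>k\<in>K. \<Sum>l\<in>L. c k * d l * inner_a a (u k) (v l))"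
proof -
  have V: "(\<Sum>l\<in>L. (\<lambda>i. d l * v l i)) \<in> M_a a"
    using assms(2) by (intro M_a_sum M_a_scale)
  have "inner_a a (\<Sum>k\<in>K. (\<lambda>i. c k * u k i)) (\<Sum>l\<in>L. (\<lambda>i. d l * v l i))
      = (\<Sum>k\<in>K. c k * inner_a a (\<Sum>l\<in>L. (\<lambda>i. d l * v l i)) (u k))"
    using assms V by (simp add: inner_a_sum_left M_a_scale inner_a_scale_left inner_a_commute)
  also have "\<dots> = (\<Sum>k\<in>K. c k * (\<Sum>l\<in>L. d l * inner_a a (v l) (u k)))"
    using assms by (simp add: inner_a_sum_left M_a_scale inner_a_scale_left)
  finally show ?thesis
    by (simp add: sum_distrib_left mult.assoc mult.left_commute inner_a_commute)
qed

lemma norm_a_combination_eq: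
  assumes "\<And>k. k \<in> K \<Longrightarrow> u k \<in> M_a a" "\<And>k. k \<in> K \<Longrightarrow> v k \<in> M_a a"
    and "\<And>k l. k \<in> K \<Longrightarrow> l \<in> K \<Longrightarrow> inner_a a (u k) (u l) = inner_a a (v k) (v l)"
  shows "norm_a a (\<Sum>k\<in>K. (\<lambda>i. c k * u k i)) = norm_a a (\<Sum>k\<in>K. (\<lambda>i. c k * v k i))"
  unfolding norm_a_def using assms by (simp add: inner_a_combination)

lemma inner_a_polarize:
  assumes "x \<in> M_a a" "y \<in> M_a a"
  shows "2 * inner_a a x y = (norm_a a x)\<^sup>2 + (norm_a a y)\<^sup>2 - (norm_a a (x - y))\<^sup>2"
proof -
  have "(\<lambda>i. 2 * ((a i)\<^sup>2 * x i * y i)) sums (2 * inner_a a x y)"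
    unfolding inner_a_def by (intro sums_mult summable_sums inner_a_summable assms)
  moreover have "(\<lambda>i. 2 * ((a i)\<^sup>2 * x i * y i))
      = (\<lambda>i. (a i)\<^sup>2 * (x i)\<^sup>2 + (a i)\<^sup>2 * (y i)\<^sup>2 - (a i)\<^sup>2 * ((x - y) i)\<^sup>2)"
    by (simp add: fun_eq_iff power2_eq_square algebra_simps)
  ultimately have "(\<lambda>i. (a i)\<^sup>2 * (x i)\<^sup>2 + (a i)\<^sup>2 * (y i)\<^sup>2 - (a i)\<^sup>2 * ((x - y) i)\<^sup>2)
      sums (2 * inner_a a x y)"
    by simp
  moreover have "(\<lambda>i. (a i)\<^sup>2 * (x i)\<^sup>2 + (a i)\<^sup>2 * (y i)\<^sup>2 - (a i)\<^sup>2 * ((x - y) i)\<^sup>2)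
      sums (inner_a a x x + inner_a a y y - inner_a a (x - y) (x - y))"
    using assms M_a_diff[OF assms] unfolding inner_a_self M_a_def
    by (intro sums_add sums_diff summable_sums) auto
  ultimately have "2 * inner_a a x y = inner_a a x x + inner_a a y y - inner_a a (x - y) (x - y)"
    by (rule sums_unique2)
  then show ?thesis
    using assms by (simp add: norm_a_power2 M_a_diff)
qed

lemma L2_set_tendsto_norm_a:
  assumes "x \<in> M_a a"
  shows "(\<lambda>N. L2_set (\<lambda>i. a i * x i) {..<N}) \<longlonglongrightarrow> norm_a a x"
proof -
  have "(\<lambda>N. \<Sum>i<N. (a i)\<^sup>2 * (x i)\<^sup>2) \<longlonglongrightarrow> inner_a a x x"
    using assms unfolding inner_a_self M_a_def by (intro summable_LIMSEQ) simp
  then show ?thesis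
    unfolding L2_set_def norm_a_def by (simp add: power_mult_distrib tendsto_real_sqrt)
qed

lemma norm_a_triangle:
  assumes "x \<in> M_a a" "y \<in> M_a a"
  shows "norm_a a (x + y) \<le> norm_a a x + norm_a a y"
proof (rule LIMSEQ_le)
  show "(\<lambda>N. L2_set (\<lambda>i. a i * (x + y) i) {..<N}) \<longlonglongrightarrow> norm_a a (x + y)"
    using assms by (intro L2_set_tendsto_norm_a M_a_add)
  show "(\<lambda>N. L2_set (\<lambda>i. a i * x i) {..<N} + L2_set (\<lambda>i. a i * y i) {..<N})
      \<longlonglongrightarrow> norm_a a x + norm_a a y"
    using assms by (intro tendsto_add L2_set_tendsto_norm_a)
  show "\<exists>N. \<forall>n\<ge>N. L2_set (\<lambda>i. a i * (x + y) i) {..<n}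
      \<le> L2_set (\<lambda>i. a i * x i) {..<n} + L2_set (\<lambda>i. a i * y i) {..<n}"
    using L2_set_triangle_ineq[of "\<lambda>i. a i * x i" "\<lambda>i. a i * y i"] by (simp add: distrib_left)
qed

lemma d_a_self [simp]: "d_a a x x = 0"
  by (simp add: d_a_def norm_a_def inner_a_def)

lemma d_a_commute: "d_a a x y = d_a a y x"
  unfolding d_a_def norm_a_def inner_a_def by (simp add: algebra_simps)

lemma d_a_triangle:
  assumes "x \<in> M_a a" "y \<in> M_a a" "z \<in> M_a a"
  shows "d_a a x z \<le> d_a a x y + d_a a y z"
  using norm_a_triangle[of "x - y" a "y - z"] assms by (simp add: d_a_def M_a_diff)

lemma d_a_eq_0_iff:
  assumes "\<forall>i. a i > 0" "x \<in> M_a a" "y \<in> M_a a"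
  shows "d_a a x y = 0 \<longleftrightarrow> x = y"
proof
  assume "d_a a x y = 0"
  then have "(\<Sum>i. (a i)\<^sup>2 * ((x - y) i)\<^sup>2) = 0"
    by (simp add: d_a_def norm_a_def inner_a_self)
  moreover have "summable (\<lambda>i. (a i)\<^sup>2 * ((x - y) i)\<^sup>2)"
    using M_a_diff[OF assms(2,3)] by (simp add: M_a_def)
  ultimately have "\<forall>i. (a i)\<^sup>2 * ((x - y) i)\<^sup>2 = 0"
    by (simp add: suminf_eq_zero_iff)
  then show "x = y"
    using assms(1) by (simp add: fun_eq_iff) (metis less_irrefl)
qed simp

lemma tendsto_d_a:
  assumes "\<And>n. P n \<in> M_a a" "\<And>n. Q n \<in> M_a a" "s \<in> M_a a" "t \<in> M_a a"
    and "(\<lambda>n. d_a a (P n) s) \<longlonglongrightarrow> 0" "(\<lambda>n. d_a a (Q n) t) \<longlonglongrightarrow> 0"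
  shows "(\<lambda>n. d_a a (P n) (Q n)) \<longlonglongrightarrow> d_a a s t"
proof -
  have "norm (d_a a (P n) (Q n) - d_a a s t) \<le> d_a a (P n) s + d_a a (Q n) t" for n
  proof -
    have "d_a a (P n) (Q n) \<le> d_a a (P n) s + d_a a s t + d_a a (Q n) t"
      using d_a_triangle[OF assms(1)[of n] assms(3) assms(2)[of n]]
        d_a_triangle[OF assms(3,4) assms(2)[of n]]
        d_a_commute[of a t "Q n"] by linarith
    moreover have "d_a a s t \<le> d_a a (P n) s + d_a a (P n) (Q n) + d_a a (Q n) t"
      using d_a_triangle[OF assms(3) assms(1)[of n] assms(4)]
        d_a_triangle[OF assms(1)[of n] assms(2)[of n] assms(4)]
        d_a_commute[of a s "P n"] by linarith
    ultimately show ?thesis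
      unfolding real_norm_def abs_le_iff by linarith
  qed
  then have "(\<lambda>n. d_a a (P n) (Q n) - d_a a s t) \<longlonglongrightarrow> 0"
    by (intro Lim_null_comparison[OF always_eventually tendsto_add_zero[OF assms(5,6)]]) blast
  then show ?thesis
    by (simp add: LIM_zero_iff)
qed

lemma series_to_unique:
  assumes "\<forall>i. a i > 0" "\<forall>i\<in>I. x i \<in> M_a a" "p \<in> M_a a" "s \<in> M_a a" "t \<in> M_a a"
    and "series_to a I x \<alpha> p s" "series_to a I x \<alpha> p t"
  shows "s = t"
proof -
  let ?P = "\<lambda>n. \<Sum>i\<in>I \<inter> {..<n}. (\<lambda>k. \<alpha> i * (x i k - p k))"
  have "?P n \<in> M_a a" for n
    using assms(2,3) by (intro M_a_combination) auto
  then have "(\<lambda>n. d_a a (?P n) (?P n)) \<longlonglongrightarrow> d_a a s t"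
    using assms(4-7) unfolding series_to_def by (intro tendsto_d_a)
  moreover have "(\<lambda>n. d_a a (?P n) (?P n)) \<longlonglongrightarrow> 0"
    by simp
  ultimately have "d_a a s t = 0"
    by (rule LIMSEQ_unique)
  then show ?thesis
    using assms(1,4,5) d_a_eq_0_iff by blast
qed

lemma series_to_finite:
  assumes "finite I"
  shows "series_to a I x \<alpha> p (\<Sum>i\<in>I. (\<lambda>k. \<alpha> i * (x i k - p k)))"
proof -
  let ?S = "\<lambda>J. \<Sum>i\<in>J. (\<lambda>k. \<alpha> i * (x i k - p k))"
  obtain N where N: "I \<subseteq> {..<N}"
    using assms finite_nat_bounded by blast
  have "d_a a (?S (I \<inter> {..<n})) (?S I) = 0" if "n \<ge> N" for n
  proof -
    have "I \<inter> {..<n} = I"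
      using N that by auto
    then show ?thesis
      by simp
  qed
  then show ?thesis
    unfolding series_to_def by (intro tendsto_eventually eventually_sequentiallyI)
qed

lemma isometry_a_inner_a_eq:
  assumes iso: "isometry_a a E f" and E: "E \<subseteq> M_a a" "f ` E \<subseteq> M_a a"
    and "p \<in> E" "x \<in> E" "y \<in> E"
  shows "inner_a a (f x - f p) (f y - f p) = inner_a a (x - p) (y - p)"
proof -
  have dist: "norm_a a (f u - f v) = norm_a a (u - v)" if "u \<in> E" "v \<in> E" for u v
    using iso that unfolding isometry_a_def d_a_def by blast
  have M: "x - p \<in> M_a a" "y - p \<in> M_a a" "f x - f p \<in> M_a a" "f y - f p \<in> M_a a"
    using assms by (auto intro: M_a_diff)
  have "2 * inner_a a (f x - f p) (f y - f p) = 2 * inner_a a (x - p) (y - p)"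
    using inner_a_polarize[OF M(3,4)] inner_a_polarize[OF M(1,2)] assms(4-6)
      dist[of x p] dist[of y p] dist[of x y] by simp
  then show ?thesis
    by simp
qed

lemma isometry_a_combination:
  assumes iso: "isometry_a a E f" and E: "E \<subseteq> M_a a" "f ` E \<subseteq> M_a a" and p: "p \<in> E"
    and fin: "finite A" "finite B" and xy: "\<forall>i\<in>A. x i \<in> E" "\<forall>j\<in>B. y j \<in> E"
  shows "d_a a (\<Sum>i\<in>A. (\<lambda>k. \<alpha> i * (f (x i) k - f p k)))
              (\<Sum>j\<in>B. (\<lambda>k. \<beta> j * (f (y j) k - f p k)))
       = d_a a (\<Sum>i\<in>A. (\<lambda>k. \<alpha> i * (x i k - p k))) (\<Sum>j\<in>B. (\<lambda>k. \<beta> j * (y j k - p k)))"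
proof -
  \<comment> \<open>The difference of the two combinations is a single one, indexed by \<open>A <+> B\<close>.\<close>
  define z where "z = case_sum x y"
  define c where "c = case_sum \<alpha> (\<lambda>j. - \<beta> j)"
  have z: "z l \<in> E" if "l \<in> A <+> B" for l
    using that xy by (auto simp: z_def)
  have neg: "(\<Sum>j\<in>B. (\<lambda>k. - \<beta> j * v j k)) = - (\<Sum>j\<in>B. (\<lambda>k. \<beta> j * v j k))"
    for v :: "_ \<Rightarrow> nat \<Rightarrow> real"
  proof -
    have "(\<lambda>k. - \<beta> j * v j k) = - (\<lambda>k. \<beta> j * v j k)" for j
      by (simp add: fun_eq_iff)
    then show ?thesis
      by (simp only: sum_negf)
  qed
  have diff: "(\<Sum>i\<in>A. (\<lambda>k. \<alpha> i * (g (x i) k - g p k)))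
      - (\<Sum>j\<in>B. (\<lambda>k. \<beta> j * (g (y j) k - g p k)))
      = (\<Sum>l\<in>A <+> B. (\<lambda>k. c l * (g (z l) k - g p k)))"
    for g :: "(nat \<Rightarrow> real) \<Rightarrow> nat \<Rightarrow> real"
    using neg fin by (simp add: sum.Plus c_def z_def comp_def)
  have "norm_a a (\<Sum>l\<in>A <+> B. (\<lambda>k. c l * (f (z l) - f p) k))
      = norm_a a (\<Sum>l\<in>A <+> B. (\<lambda>k. c l * (z l - p) k))"
    using z E p by (intro norm_a_combination_eq isometry_a_inner_a_eq[OF iso E] M_a_diff) auto
  then show ?thesis
    unfolding d_a_def diff[of f] diff[of "\<lambda>w. w"] by simp
qed

lemma isometry_a_GS_extension:
  assumes iso: "isometry_a a E f" and E: "E \<subseteq> M_a a" "f ` E \<subseteq> M_a a" and p: "p \<in> E"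
    and F_range: "\<forall>y\<in>GS a E p. F y \<in> M_a a"
    and F_def: "\<forall>I x \<alpha> s. (\<forall>i\<in>I. x i \<in> E) \<and> s \<in> M_a a \<and> series_to a I x \<alpha> p s
                  \<longrightarrow> series_to a I (\<lambda>i. f (x i)) \<alpha> (f p) (F (p + s) - f p)"
  shows "isometry_a a (GS a E p) F"
  unfolding isometry_a_def
proof (intro ballI)
  fix y1 y2
  assume y: "y1 \<in> GS a E p" "y2 \<in> GS a E p"
  obtain I x \<alpha> s where x: "\<forall>i\<in>I. x i \<in> E" and s: "s \<in> M_a a" "series_to a I x \<alpha> p s"
    and y1: "y1 = p + s"
    using y(1) unfolding GS_def by blast
  obtain J w \<beta> t where w: "\<forall>j\<in>J. w j \<in> E" and t: "t \<in> M_a a" "series_to a J w \<beta> p t"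
    and y2: "y2 = p + t"
    using y(2) unfolding GS_def by blast
  let ?P = "\<lambda>n. \<Sum>i\<in>I \<inter> {..<n}. (\<lambda>k. \<alpha> i * (x i k - p k))"
  let ?Q = "\<lambda>n. \<Sum>j\<in>J \<inter> {..<n}. (\<lambda>k. \<beta> j * (w j k - p k))"
  let ?fP = "\<lambda>n. \<Sum>i\<in>I \<inter> {..<n}. (\<lambda>k. \<alpha> i * (f (x i) k - f p k))"
  let ?fQ = "\<lambda>n. \<Sum>j\<in>J \<inter> {..<n}. (\<lambda>k. \<beta> j * (f (w j) k - f p k))"
  have M: "p \<in> M_a a" "f p \<in> M_a a" "F y1 - f p \<in> M_a a" "F y2 - f p \<in> M_a a"
    using E p F_range y by (auto intro: M_a_diff)
  have PM: "?P n \<in> M_a a" "?Q n \<in> M_a a" "?fP n \<in> M_a a" "?fQ n \<in> M_a a" for n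
    using x w E M(1,2) by (auto intro!: M_a_combination)
  have fs: "series_to a I (\<lambda>i. f (x i)) \<alpha> (f p) (F y1 - f p)"
    using F_def x s unfolding y1 by blast
  have ft: "series_to a J (\<lambda>j. f (w j)) \<beta> (f p) (F y2 - f p)"
    using F_def w t unfolding y2 by blast
  have "(\<lambda>n. d_a a (?P n) (?Q n)) \<longlonglongrightarrow> d_a a s t"
    using PM(1,2) s(1) t(1) s(2) t(2) unfolding series_to_def by (rule tendsto_d_a)
  moreover have "(\<lambda>n. d_a a (?fP n) (?fQ n)) \<longlonglongrightarrow> d_a a (F y1 - f p) (F y2 - f p)"
    using PM(3,4) M(3,4) fs ft unfolding series_to_def by (rule tendsto_d_a)
  moreover have "d_a a (?fP n) (?fQ n) = d_a a (?P n) (?Q n)" for n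
    using x w by (intro isometry_a_combination[OF iso E p]) auto
  ultimately have "d_a a (F y1 - f p) (F y2 - f p) = d_a a s t"
    using LIMSEQ_unique by simp
  then show "d_a a (F y1) (F y2) = d_a a y1 y2"
    using y1 y2 by (simp add: d_a_def)
qed

lemma GS_extension_agrees:
  assumes a_pos: "\<forall>i. a i > 0" and E: "E \<subseteq> M_a a" "f ` E \<subseteq> M_a a" and p: "p \<in> E"
    and F_range: "\<forall>y\<in>GS a E p. F y \<in> M_a a"
    and F_def: "\<forall>I x \<alpha> s. (\<forall>i\<in>I. x i \<in> E) \<and> s \<in> M_a a \<and> series_to a I x \<alpha> p s
                  \<longrightarrow> series_to a I (\<lambda>i. f (x i)) \<alpha> (f p) (F (p + s) - f p)"
    and z: "z \<in> E"
  shows "F z = f z"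
proof -
  have fin: "finite {0::nat}"
    by simp
  have single: "(\<Sum>i\<in>{0::nat}. (\<lambda>k. 1 * (u k - v k))) = u - v" for u v :: "nat \<Rightarrow> real"
    by (simp add: fun_eq_iff)
  have M: "z \<in> M_a a" "z - p \<in> M_a a" "f p \<in> M_a a" "f z \<in> M_a a" "f z - f p \<in> M_a a"
    using E p z by (auto intro: M_a_diff)
  have ser: "series_to a {0} (\<lambda>i. z) (\<lambda>i. 1) p (z - p)"
    using series_to_finite[OF fin, of a "\<lambda>i. z" "\<lambda>i. 1" p] by (simp only: single)
  have "z \<in> GS a E p"
    unfolding GS_def using M(1,2) z ser
    by (intro CollectI conjI exI[where x="{0}"] exI[where x="\<lambda>i. z"] exI[where x="\<lambda>i. 1"]
        exI[where x="z - p"]) auto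
  then have FM: "F z - f p \<in> M_a a"
    using F_range M(3) by (blast intro: M_a_diff)
  have "series_to a {0} (\<lambda>i. f z) (\<lambda>i. 1) (f p) (F z - f p)"
    using F_def[rule_format, of "{0}" "\<lambda>i. z" "z - p" "\<lambda>i. 1"] z M(2) ser by simp
  moreover have "series_to a {0} (\<lambda>i. f z) (\<lambda>i. 1) (f p) (f z - f p)"
    using series_to_finite[OF fin, of a "\<lambda>i. f z" "\<lambda>i. 1" "f p"] by (simp only: single)
  ultimately have "F z - f p = f z - f p"
    using M(4) by (intro series_to_unique[OF a_pos _ M(3) FM M(5)]) auto
  then show ?thesis
    by simp
qed

theorem theorem3p9:
  fixes a :: "nat \<Rightarrow> real"
    and E1 E2 :: "(nat \<Rightarrow> real) set"
    and f F :: "(nat \<Rightarrow> real) \<Rightarrow> (nat \<Rightarrow> real)"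
    and p :: "nat \<Rightarrow> real"
  assumes a_pos: "\<forall>i. a i > 0"
    and a_sq: "summable (\<lambda>i. (a i)\<^sup>2)"
    and E1_sub: "E1 \<subseteq> M_a a" and E2_sub: "E2 \<subseteq> M_a a"
    and E1_ne: "E1 \<noteq> {}" and E2_ne: "E2 \<noteq> {}"
    and E1_bd: "bounded_a a E1" and E2_bd: "bounded_a a E2"
    and f_onto: "f ` E1 = E2"
    and f_iso: "isometry_a a E1 f"
    and p_in: "p \<in> E1"
    and F_range: "\<forall>y\<in>GS a E1 p. F y \<in> M_a a"
    and F_def: "\<forall>I x \<alpha> s. (\<forall>i\<in>I. x i \<in> E1) \<and> s \<in> M_a a \<and> series_to a I x \<alpha> p s
                  \<longrightarrow> series_to a I (\<lambda>i. f (x i)) \<alpha> (f p) (F (p + s) - f p)"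
  shows "isometry_a a (GS a E1 p) F \<and> (\<forall>x\<in>E1. F x = f x)"
proof -
  have fE1: "f ` E1 \<subseteq> M_a a"
    using f_onto E2_sub by simp
  show ?thesis
    using isometry_a_GS_extension[OF f_iso E1_sub fE1 p_in F_range F_def]
      GS_extension_agrees[OF a_pos E1_sub fE1 p_in F_range F_def] by blast
qed

end
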